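(* For every finite metric $(V,d)$ with root $r$, every $M>0$, and every Level-Prim tree $\mathcal H$ of $G$ (with respect to $r$ and $M$), we have $d(\mathcal H)\le 8\cdot\mathrm{MST}(G)$.
   Context: Levels: $V_0=\{u:d(r,u)\le M\}$, and for $i\ge1$, $V_i=\{u:2^{i-1}M<d(r,u)\le2^iM\}$. Write $V_{\le i}=\bigcup_{j\le i}V_j$ and $V_{<i}=V_{\le i-1}$, with $V_{<0}=\emptyset$. $G$ is the complete graph on $V$ weighted by $d$. $G[U]$ is the induced subgraph, and $G/U$ contracts $U$ to one vertex, keeping parallel edges. $\mathrm{MST}(G)$ is the minimum spanning tree weight, and $d(F)$ is the total weight of an edge set $F$. Level-Prim tree: $H_i$ is a minimum spanning tree of $G[V_{\le i}]/V_{<i}$, viewed as edges of $G$, and $\mathcal H=\bigcup_{i\ge0}H_i$. *)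

theory Defs
  imports Complex_Main "HOL-Library.Uprod"
begin

definition finite_metric :: "'a set \<Rightarrow> ('a \<Rightarrow> 'a \<Rightarrow> real) \<Rightarrow> bool" where
  "finite_metric V d \<longleftrightarrow> finite V \<and>
     (\<forall>x\<in>V. d x x = 0) \<and>
     (\<forall>x\<in>V. \<forall>y\<in>V. x \<noteq> y \<longrightarrow> d x y > 0) \<and>
     (\<forall>x\<in>V. \<forall>y\<in>V. d x y = d y x) \<and>
     (\<forall>x\<in>V. \<forall>y\<in>V. \<forall>z\<in>V. d x z \<le> d x y + d y z)"

definition level :: "'a set \<Rightarrow> ('a \<Rightarrow> 'a \<Rightarrow> real) \<Rightarrow> 'a \<Rightarrow> real \<Rightarrow> nat \<Rightarrow> 'a set" where
  "level V d r M i =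
     (if i = 0 then {u\<in>V. d r u \<le> M}
      else {u\<in>V. 2 ^ (i - 1) * M < d r u \<and> d r u \<le> 2 ^ i * M})"

definition level_le :: "'a set \<Rightarrow> ('a \<Rightarrow> 'a \<Rightarrow> real) \<Rightarrow> 'a \<Rightarrow> real \<Rightarrow> nat \<Rightarrow> 'a set" where
  "level_le V d r M i = (\<Union>j\<in>{..i}. level V d r M j)"

definition level_lt :: "'a set \<Rightarrow> ('a \<Rightarrow> 'a \<Rightarrow> real) \<Rightarrow> 'a \<Rightarrow> real \<Rightarrow> nat \<Rightarrow> 'a set" where
  "level_lt V d r M i = (\<Union>j\<in>{..<i}. level V d r M j)"

text \<open>Edges of the complete graph G are unordered pairs Upair u v with u \<noteq> v.
  The weight of an edge is d u v; the weight of an edge set is the sum.\<close>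
definition edge_len :: "('a \<Rightarrow> 'a \<Rightarrow> real) \<Rightarrow> 'a uprod \<Rightarrow> real" where
  "edge_len d e = (THE x. \<exists>u v. e = Upair u v \<and> x = d u v)"

definition weight :: "('a \<Rightarrow> 'a \<Rightarrow> real) \<Rightarrow> 'a uprod set \<Rightarrow> real" where
  "weight d F = (\<Sum>e\<in>F. edge_len d e)"

text \<open>Contraction map of G[U]/W: vertices of W become the single vertex None
  (when W is empty nothing is contracted).\<close>
definition contr :: "'a set \<Rightarrow> 'a \<Rightarrow> 'a option" where
  "contr W x = (if x \<in> W then None else Some x)"

text \<open>Edges of the multigraph G[U]/W, viewed as edges of G: edges of G[U] that do not
  become loops (i.e. not both endpoints in W). Parallel edges are kept since distinct
  edges of G are distinct edges.\<close>
definition contr_edges :: "'a set \<Rightarrow> 'a set \<Rightarrow> 'a uprod set" where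
  "contr_edges U W = {Upair u v | u v. u \<in> U \<and> v \<in> U \<and> u \<noteq> v \<and> \<not> (u \<in> W \<and> v \<in> W)}"

text \<open>F (a set of edges of G) is a spanning tree of G[U]/W: a connected spanning
  subgraph of the contracted multigraph with (number of vertices - 1) edges.\<close>
definition spanning_tree_contr :: "'a set \<Rightarrow> 'a set \<Rightarrow> 'a uprod set \<Rightarrow> bool" where
  "spanning_tree_contr U W F \<longleftrightarrow>
     F \<subseteq> contr_edges U W \<and> finite F \<and>
     card F + 1 = card (contr W ` U) \<and>
     (\<forall>x\<in>U. \<forall>y\<in>U. (contr W x, contr W y) \<in>
        {(contr W u, contr W v) | u v. Upair u v \<in> F}\<^sup>*)"

definition MST_contr :: "('a \<Rightarrow> 'a \<Rightarrow> real) \<Rightarrow> 'a set \<Rightarrow> 'a set \<Rightarrow> 'a uprod set \<Rightarrow> bool" where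
  "MST_contr d U W F \<longleftrightarrow> spanning_tree_contr U W F \<and>
     (\<forall>F'. spanning_tree_contr U W F' \<longrightarrow> weight d F \<le> weight d F')"

definition MST_weight :: "'a set \<Rightarrow> ('a \<Rightarrow> 'a \<Rightarrow> real) \<Rightarrow> real" where
  "MST_weight V d = Min {weight d F | F. spanning_tree_contr V {} F}"

definition level_prim_tree :: "'a set \<Rightarrow> ('a \<Rightarrow> 'a \<Rightarrow> real) \<Rightarrow> 'a \<Rightarrow> real \<Rightarrow> 'a uprod set \<Rightarrow> bool" where
  "level_prim_tree V d r M H \<longleftrightarrow>
     (\<exists>Hs :: nat \<Rightarrow> 'a uprod set.
        (\<forall>i. MST_contr d (level_le V d r M i) (level_lt V d r M i) (Hs i)) \<and>
        H = (\<Union>i. Hs i))"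

end

theory Submission
  imports Defs
begin

text \<open>
  Let T be a minimum spanning tree of G.  Doubling T gives a closed walk from the
  root r through all vertices of length at most 2 d(T).  Fix a level i.  Cutting the walk at its
  visits to V_{\<le>i}, each piece between consecutive visits x and y is replaced by the edge xy if
  the piece stays within radius 2^(i+1) M, and by the two edges xr, yr otherwise.  These edges
  connect G[V_{\<le>i}]/V_{<i}, hence contain a spanning tree of it, so the minimum spanning tree
  H_i weighs at most their total.  That total is bounded by the level-i charge of the walk, which
  charges a step ab its length d(a,b) on the (at most two) levels where it is active, plus the
  change of its radius d(r,.) clamped to [2^i M, 2^(i+1) M].  Summed over all levels the clamped
  terms telescope to |d(r,a) - d(r,b)| \<le> d(a,b), so every step pays at most 3 d(a,b) in total
  and d(H) \<le> 3 \<cdot> 2 d(T) = 6 MST(G), which is stronger than the claimed factor 8.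
\<close>

lemma Upair_swap: "Upair b a = Upair a b"
  by simp

definition contr_rel :: "'a set \<Rightarrow> 'a uprod set \<Rightarrow> ('a option \<times> 'a option) set" where
  "contr_rel W E = {(contr W u, contr W v) | u v. Upair u v \<in> E}"

definition joined :: "'a set \<Rightarrow> 'a uprod set \<Rightarrow> 'a \<Rightarrow> 'a \<Rightarrow> bool" where
  "joined W E x y \<longleftrightarrow> (contr W x, contr W y) \<in> (contr_rel W E)\<^sup>*"

definition connects :: "'a set \<Rightarrow> 'a set \<Rightarrow> 'a uprod set \<Rightarrow> bool" where
  "connects U W E \<longleftrightarrow> (\<forall>x\<in>U. \<forall>y\<in>U. joined W E x y)"

lemma spanning_tree_contr_iff:
  "spanning_tree_contr U W F \<longleftrightarrow> F \<subseteq> contr_edges U W \<and> finite F \<and>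
     card F + 1 = card (contr W ` U) \<and> connects U W F"
  unfolding spanning_tree_contr_def connects_def joined_def contr_rel_def ..

lemma contr_rel_sym: "sym (contr_rel W E)"
  unfolding contr_rel_def sym_def by (auto, metis Upair_inject)

lemma contr_rel_mono: "E \<subseteq> E' \<Longrightarrow> contr_rel W E \<subseteq> contr_rel W E'"
  unfolding contr_rel_def by auto

lemma joined_refl [simp]: "joined W E x x"
  unfolding joined_def by simp

lemma joined_sym: "joined W E x y \<Longrightarrow> joined W E y x"
  unfolding joined_def by (meson contr_rel_sym sym_rtrancl symD)

lemma joined_trans: "joined W E x y \<Longrightarrow> joined W E y z \<Longrightarrow> joined W E x z"
  unfolding joined_def by (rule rtrancl_trans)

lemma joined_mono: "joined W E x y \<Longrightarrow> E \<subseteq> E' \<Longrightarrow> joined W E' x y"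
  unfolding joined_def using rtrancl_mono[OF contr_rel_mono] by blast

lemma joined_edge: "Upair x y \<in> E \<Longrightarrow> joined W E x y"
  unfolding joined_def contr_rel_def by auto

lemma joined_contracted: "x \<in> W \<Longrightarrow> y \<in> W \<Longrightarrow> joined W E x y"
  unfolding joined_def contr_def by simp

lemma finite_contr_edges: "finite U \<Longrightarrow> finite (contr_edges U W)"
proof (rule finite_subset)
  show "contr_edges U W \<subseteq> (\<lambda>(u, v). Upair u v) ` (U \<times> U)"
    unfolding contr_edges_def by auto
qed simp

text \<open>The edge xy joins x and y in G[U]/W whenever it survives the contraction; if it
  does not, x and y are already identified.\<close>
lemma joined_direct:
  assumes "x \<in> U" "y \<in> U"
  shows "joined W (contr_edges U W \<inter> {Upair x y}) x y"
proof (cases "Upair x y \<in> contr_edges U W")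
  case True
  then show ?thesis by (intro joined_edge) simp
next
  case False
  then have "x = y \<or> x \<in> W \<and> y \<in> W" using assms unfolding contr_edges_def by blast
  then show ?thesis using joined_contracted by fastforce
qed

lemma connects_from_root:
  assumes "\<And>x. x \<in> U \<Longrightarrow> joined W E x0 x"
  shows "connects U W E"
  unfolding connects_def using assms joined_sym joined_trans by meson

lemma rtrancl_leaves_set:
  assumes "(a, b) \<in> R\<^sup>*" "a \<in> S" "b \<notin> S"
  shows "\<exists>p q. (p, q) \<in> R \<and> p \<in> S \<and> q \<notin> S"
  using assms by (induction rule: rtrancl_induct) auto

text \<open>Invariant of Prim's growth procedure: F is a tree on the contracted vertex set S
  with root z0 (it has |S| - 1 edges, stays inside S and reaches all of S).\<close>
definition rooted_tree :: "'a set \<Rightarrow> 'a option \<Rightarrow> 'a option set \<Rightarrow> 'a uprod set \<Rightarrow> bool" where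
  "rooted_tree W z0 S F \<longleftrightarrow> finite S \<and> finite F \<and> card F + 1 = card S \<and> z0 \<in> S \<and>
     contr_rel W F \<subseteq> S \<times> S \<and> (\<forall>z\<in>S. (z0, z) \<in> (contr_rel W F)\<^sup>*)"

lemma rooted_tree_single: "rooted_tree W z0 {z0} {}"
  unfolding rooted_tree_def contr_rel_def by auto

lemma contr_rel_insert:
  "contr_rel W (insert (Upair a b) F) =
     insert (contr W a, contr W b) (insert (contr W b, contr W a) (contr_rel W F))"
  unfolding contr_rel_def by auto

text \<open>If E connects G[U]/W, every proper partial tree is left by some edge of E, which
  extends it by a new vertex.\<close>
lemma rooted_tree_grow:
  assumes T: "rooted_tree W z0 S F" and EU: "E \<subseteq> contr_edges U W"
    and conn: "connects U W E" and z0: "z0 \<in> contr W ` U" and SU: "S \<subset> contr W ` U"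
  shows "\<exists>q e. q \<in> contr W ` U - S \<and> e \<in> E \<and> rooted_tree W z0 (insert q S) (insert e F)"
proof -
  obtain z where z: "z \<in> contr W ` U" "z \<notin> S" using SU by auto
  have "(z0, z) \<in> (contr_rel W E)\<^sup>*"
    using conn z0 z(1) unfolding connects_def joined_def by auto
  then obtain p q where pq: "(p, q) \<in> contr_rel W E" "p \<in> S" "q \<notin> S"
    using rtrancl_leaves_set[of z0 z _ S] T z(2) unfolding rooted_tree_def by blast
  then obtain a b where ab: "p = contr W a" "q = contr W b" "Upair a b \<in> E"
    unfolding contr_rel_def by auto
  have "b \<in> U" using ab(3) EU unfolding contr_edges_def by auto
  then have qU: "q \<in> contr W ` U" using ab(2) by simp
  let ?F' = "insert (Upair a b) F"
  have new: "Upair a b \<notin> F"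
    using T pq ab unfolding rooted_tree_def contr_rel_def by blast
  have old: "(contr_rel W F)\<^sup>* \<subseteq> (contr_rel W ?F')\<^sup>*"
    by (rule rtrancl_mono, rule contr_rel_mono) auto
  have "(z0, p) \<in> (contr_rel W ?F')\<^sup>*" using T pq(2) old unfolding rooted_tree_def by auto
  then have "(z0, q) \<in> (contr_rel W ?F')\<^sup>*"
    using ab contr_rel_insert[of W a b F] by (auto intro: rtrancl_into_rtrancl)
  then have "rooted_tree W z0 (insert q S) ?F'"
    using T new pq old ab contr_rel_insert[of W a b F] unfolding rooted_tree_def by auto
  then show ?thesis using qU pq(3) ab(3) by blast
qed

lemma spanning_tree_exists:
  assumes finU: "finite U" and x0: "x0 \<in> U" and EU: "E \<subseteq> contr_edges U W"
    and conn: "connects U W E"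
  shows "\<exists>F\<subseteq>E. spanning_tree_contr U W F"
proof -
  define X where "X = contr W ` U"
  define z0 where "z0 = contr W x0"
  have finX: "finite X" and z0X: "z0 \<in> X" using finU x0 unfolding X_def z0_def by auto
  have grow: "\<exists>S F. F \<subseteq> E \<and> S \<subseteq> X \<and> card S = Suc n \<and> rooted_tree W z0 S F"
    if "Suc n \<le> card X" for n
    using that
  proof (induction n)
    case 0
    show ?case using rooted_tree_single[of W z0] z0X by (intro exI[of _ "{z0}"] exI[of _ "{}"]) auto
  next
    case (Suc n)
    then obtain S F where SF: "F \<subseteq> E" "S \<subseteq> X" "card S = Suc n" "rooted_tree W z0 S F" by auto
    have "S \<subset> X" using SF(2,3) Suc.prems by auto
    then obtain q e where qe: "q \<in> X - S" "e \<in> E" "rooted_tree W z0 (insert q S) (insert e F)"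
      using rooted_tree_grow[OF SF(4) EU conn] z0X unfolding X_def by blast
    have "card (insert q S) = Suc (Suc n)"
      using qe(1) SF(3) finite_subset[OF SF(2) finX] by simp
    then show ?case using qe SF(1,2) by (intro exI[of _ "insert q S"] exI[of _ "insert e F"]) auto
  qed
  have "0 < card X" unfolding card_gt_0_iff using finX z0X by auto
  then obtain S F where SF: "F \<subseteq> E" "S \<subseteq> X" "card S = card X" "rooted_tree W z0 S F"
    using grow[of "card X - 1"] by auto
  have SX: "S = X" using card_subset_eq[OF finX SF(2,3)] .
  have "joined W F x0 x" if "x \<in> U" for x
    using SF(4) that unfolding SX rooted_tree_def joined_def X_def z0_def by auto
  then have "connects U W F" by (rule connects_from_root)
  moreover have "F \<subseteq> contr_edges U W" "card F + 1 = card X" "finite F"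
    using SF EU unfolding SX rooted_tree_def by auto
  ultimately show ?thesis using SF(1) unfolding spanning_tree_contr_iff X_def by blast
qed

fun walk_len :: "('a \<Rightarrow> 'a \<Rightarrow> real) \<Rightarrow> 'a list \<Rightarrow> real" where
  "walk_len f (x # y # xs) = f x y + walk_len f (y # xs)"
| "walk_len f _ = 0"

lemma walk_len_append: "walk_len f (xs @ [a]) + walk_len f (a # ys) = walk_len f (xs @ a # ys)"
proof (induction xs)
  case (Cons x xs) then show ?case by (cases xs) auto
qed simp

lemma walk_len_mono:
  "(\<And>a b. a \<in> set xs \<Longrightarrow> b \<in> set xs \<Longrightarrow> f a b \<le> g a b) \<Longrightarrow> walk_len f xs \<le> walk_len g xs"
proof (induction f xs rule: walk_len.induct)
  case (1 f x y xs)
  then have "walk_len f (y # xs) \<le> walk_len g (y # xs)" "f x y \<le> g x y" by auto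
  then show ?case by simp
qed auto

lemma walk_len_nonneg:
  "(\<And>a b. a \<in> set xs \<Longrightarrow> b \<in> set xs \<Longrightarrow> 0 \<le> f a b) \<Longrightarrow> 0 \<le> walk_len f xs"
  by (induction f xs rule: walk_len.induct) auto

lemma walk_len_sum: "walk_len (\<lambda>a b. \<Sum>i\<in>I. f i a b) xs = (\<Sum>i\<in>I. walk_len (f i) xs)"
  by (induction xs rule: induct_list012) (auto simp: sum.distrib)

lemma walk_len_cmult: "walk_len (\<lambda>a b. c * f a b) xs = c * walk_len f xs"
  by (induction xs rule: induct_list012) (auto simp: algebra_simps)

lemma walk_len_telescope:
  "xs \<noteq> [] \<Longrightarrow> \<bar>g (hd xs) - g (last xs)\<bar> \<le> walk_len (\<lambda>a b. \<bar>g a - g b\<bar>) xs"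
  by (induction xs rule: induct_list012) auto

lemma walk_len_triangle:
  assumes "\<And>x y z. x \<in> set xs \<Longrightarrow> y \<in> set xs \<Longrightarrow> z \<in> set xs \<Longrightarrow> d x z \<le> d x y + d y z"
    and "\<And>x. x \<in> set xs \<Longrightarrow> d x x = 0" and "xs \<noteq> []"
  shows "d (hd xs) (last xs) \<le> walk_len d xs"
  using assms
proof (induction d xs rule: walk_len.induct)
  case (1 f x y xs)
  then have "f y (last (y # xs)) \<le> walk_len f (y # xs)"
    and "f x (last (y # xs)) \<le> f x y + f y (last (y # xs))" by auto
  then show ?case by simp
qed auto

lemma edge_len_Upair: "d u v = d v u \<Longrightarrow> edge_len d (Upair u v) = d u v"
  unfolding edge_len_def by (rule the_equality) auto

lemma weight_mono:
  assumes "finite E" "F \<subseteq> E" "\<And>e. e \<in> E - F \<Longrightarrow> 0 \<le> edge_len d e"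
  shows "weight d F \<le> weight d E"
  unfolding weight_def using assms by (intro sum_mono2) auto

lemma weight_singleton: "weight d {e} = edge_len d e"
  unfolding weight_def by simp

lemma weight_pair_le:
  "0 \<le> edge_len d e1 \<Longrightarrow> 0 \<le> edge_len d e2 \<Longrightarrow> weight d {e1, e2} \<le> edge_len d e1 + edge_len d e2"
  unfolding weight_def by (cases "e1 = e2") simp_all

lemma weight_union_le:
  assumes "finite A" "finite B" "\<And>e. e \<in> A \<inter> B \<Longrightarrow> 0 \<le> edge_len d e"
  shows "weight d (A \<union> B) \<le> weight d A + weight d B"
proof -
  have "weight d (A \<union> B) + weight d (A \<inter> B) = weight d A + weight d B"
    unfolding weight_def using sum.union_inter[OF assms(1,2)] by simp
  moreover have "0 \<le> weight d (A \<inter> B)" unfolding weight_def using assms(3) by (intro sum_nonneg)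
  ultimately show ?thesis by linarith
qed

lemma weight_UN_le:
  assumes "finite I" "\<And>i. i \<in> I \<Longrightarrow> finite (A i)" "\<And>e. e \<in> (\<Union>i\<in>I. A i) \<Longrightarrow> 0 \<le> edge_len d e"
  shows "weight d (\<Union>i\<in>I. A i) \<le> (\<Sum>i\<in>I. weight d (A i))"
  using assms
proof (induction I rule: finite_induct)
  case empty then show ?case by (simp add: weight_def)
next
  case (insert j I)
  have "weight d (A j \<union> (\<Union>i\<in>I. A i)) \<le> weight d (A j) + weight d (\<Union>i\<in>I. A i)"
    by (rule weight_union_le) (use insert.hyps insert.prems in auto)
  also have "\<dots> \<le> weight d (A j) + (\<Sum>i\<in>I. weight d (A i))" using insert by simp
  finally show ?case using insert.hyps by simp
qed

lemma edge_len_nonneg: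
  assumes "set_uprod e \<subseteq> V" "\<forall>a\<in>V. \<forall>b\<in>V. d a b = d b a" "\<forall>a\<in>V. \<forall>b\<in>V. 0 \<le> d a b"
  shows "0 \<le> edge_len d e"
proof (cases e)
  case (Upair u v) then show ?thesis using assms edge_len_Upair[of d u v] by simp
qed

definition tree_adj :: "'a uprod set \<Rightarrow> ('a \<times> 'a) set" where
  "tree_adj T = {(u, v). Upair u v \<in> T}"

definition reach :: "'a uprod set \<Rightarrow> 'a \<Rightarrow> 'a set" where
  "reach T x = {y. (x, y) \<in> (tree_adj T)\<^sup>*}"

definition edges_within :: "'a uprod set \<Rightarrow> 'a set \<Rightarrow> 'a uprod set" where
  "edges_within T R = {e \<in> T. set_uprod e \<subseteq> R}"

lemma tree_adj_sym: "sym (tree_adj T)"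
  unfolding tree_adj_def by (rule symI) (simp add: Upair_swap)

lemma reach_self: "x \<in> reach T x"
  unfolding reach_def by auto

lemma reach_step: "y \<in> reach T x \<Longrightarrow> Upair y z \<in> T \<Longrightarrow> z \<in> reach T x"
  unfolding reach_def tree_adj_def by (auto intro: rtrancl_into_rtrancl)

lemma reach_sym: "y \<in> reach T x \<Longrightarrow> x \<in> reach T y"
  unfolding reach_def by (meson tree_adj_sym mem_Collect_eq sym_rtrancl symD)

lemma reach_trans: "y \<in> reach T x \<Longrightarrow> z \<in> reach T y \<Longrightarrow> z \<in> reach T x"
  unfolding reach_def by auto

lemma reach_mono: "T \<subseteq> T' \<Longrightarrow> reach T x \<subseteq> reach T' x"
  unfolding reach_def tree_adj_def by (auto elim: rtrancl_mono[THEN subsetD, rotated])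

lemma reach_disjoint:
  assumes "b \<notin> reach T x"
  shows "reach T x \<inter> reach T b = {}"
proof (rule ccontr)
  assume "reach T x \<inter> reach T b \<noteq> {}"
  then obtain y where "y \<in> reach T x" "y \<in> reach T b" by blast
  then have "b \<in> reach T x" by (meson reach_sym reach_trans)
  with assms show False by contradiction
qed

lemma reach_least:
  assumes "x \<in> R" "\<And>y z. y \<in> R \<Longrightarrow> Upair y z \<in> T \<Longrightarrow> z \<in> R"
  shows "reach T x \<subseteq> R"
proof
  fix y assume "y \<in> reach T x"
  then have "(x, y) \<in> (tree_adj T)\<^sup>*" unfolding reach_def by auto
  then show "y \<in> R" using assms by (induction rule: rtrancl_induct) (auto simp: tree_adj_def)
qed

lemma reach_insert_inside:
  assumes "a \<in> reach T x \<longleftrightarrow> b \<in> reach T x"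
  shows "reach (insert (Upair a b) T) x = reach T x"
proof
  show "reach (insert (Upair a b) T) x \<subseteq> reach T x"
  proof (rule reach_least)
    fix y z assume y: "y \<in> reach T x" and yz: "Upair y z \<in> insert (Upair a b) T"
    show "z \<in> reach T x"
    proof (cases "Upair y z \<in> T")
      case True then show ?thesis using y by (rule reach_step[rotated])
    next
      case False
      then have "y = a \<and> z = b \<or> y = b \<and> z = a" using yz by simp
      then show ?thesis using y assms by blast
    qed
  qed (rule reach_self)
qed (rule reach_mono, auto)

lemma reach_insert_cross:
  assumes "a \<in> reach T x" "b \<notin> reach T x"
  shows "reach (insert (Upair a b) T) x = reach T x \<union> reach T b"
proof
  show "reach (insert (Upair a b) T) x \<subseteq> reach T x \<union> reach T b"
  proof (rule reach_least)
    fix y z assume y: "y \<in> reach T x \<union> reach T b" and yz: "Upair y z \<in> insert (Upair a b) T"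
    show "z \<in> reach T x \<union> reach T b"
    proof (cases "Upair y z \<in> T")
      case True then show ?thesis using y reach_step[OF _ True] by blast
    next
      case False
      then have "y = a \<and> z = b \<or> y = b \<and> z = a" using yz by simp
      then show ?thesis using assms(1) reach_self[of b] by blast
    qed
  qed (simp add: reach_self)
  have old: "reach T y \<subseteq> reach (insert (Upair a b) T) y" for y by (rule reach_mono) auto
  have "b \<in> reach (insert (Upair a b) T) x"
    by (rule reach_step[of a]) (use old[of x] assms(1) in auto)
  then show "reach T x \<union> reach T b \<subseteq> reach (insert (Upair a b) T) x"
    using old[of x] old[of b] reach_trans[of b _ x] by blast
qed

lemma weight_within_cross:
  assumes "finite T" "a \<in> reach T x" "b \<notin> reach T x"
  shows "weight d (edges_within (insert (Upair a b) T) (reach T x \<union> reach T b)) =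
    edge_len d (Upair a b) + weight d (edges_within T (reach T x)) + weight d (edges_within T (reach T b))"
proof -
  let ?R = "reach T x" and ?Q = "reach T b"
  have disj: "?R \<inter> ?Q = {}" using reach_disjoint assms(3) .
  have side: "set_uprod e \<subseteq> ?R \<or> set_uprod e \<subseteq> ?Q" if "e \<in> T" "set_uprod e \<subseteq> ?R \<union> ?Q" for e
  proof -
    obtain u v where e: "e = Upair u v" by (cases e)
    have uv: "Upair u v \<in> T" using that(1) e by simp
    then have vu: "Upair v u \<in> T" using Upair_swap[of u v] by simp
    have "u \<in> reach T y \<longleftrightarrow> v \<in> reach T y" for y
      using reach_step[OF _ uv] reach_step[OF _ vu] by blast
    then show ?thesis using that(2) e by auto
  qed
  have split: "edges_within (insert (Upair a b) T) (?R \<union> ?Q) =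
      insert (Upair a b) (edges_within T ?R \<union> edges_within T ?Q)"
  proof (intro equalityI subsetI)
    fix e assume "e \<in> edges_within (insert (Upair a b) T) (?R \<union> ?Q)"
    then have "e = Upair a b \<or> e \<in> T \<and> set_uprod e \<subseteq> ?R \<union> ?Q"
      unfolding edges_within_def by blast
    then show "e \<in> insert (Upair a b) (edges_within T ?R \<union> edges_within T ?Q)"
      using side unfolding edges_within_def by blast
  next
    fix e assume "e \<in> insert (Upair a b) (edges_within T ?R \<union> edges_within T ?Q)"
    then show "e \<in> edges_within (insert (Upair a b) T) (?R \<union> ?Q)"
      using assms(2) reach_self[of b T] unfolding edges_within_def by auto
  qed
  have new: "Upair a b \<notin> edges_within T ?R \<union> edges_within T ?Q"
    using assms(2,3) disj unfolding edges_within_def by auto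
  have "set_uprod e \<noteq> {}" for e :: "'a uprod" by (cases e) simp
  then have "edges_within T ?R \<inter> edges_within T ?Q = {}"
    using disj unfolding edges_within_def by blast
  moreover have "finite (edges_within T R)" for R using assms(1) unfolding edges_within_def by simp
  ultimately show ?thesis
    unfolding split weight_def using new by (simp add: sum.union_disjoint)
qed

lemma joined_uncontracted:
  assumes "joined {} E x y"
  shows "y \<in> reach E x"
proof -
  have walk: "\<exists>y. z = Some y \<and> y \<in> reach E x" if "(Some x, z) \<in> (contr_rel {} E)\<^sup>*" for z
    using that
  proof (induction rule: rtrancl_induct)
    case base then show ?case by (simp add: reach_self)
  next
    case (step z z')
    then obtain y where y: "z = Some y" "y \<in> reach E x" by blast
    from step(2) obtain u v where uv: "z = Some u" "z' = Some v" "Upair u v \<in> E"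
      unfolding contr_rel_def contr_def by auto
    then have "Upair y v \<in> E" using y(1) by simp
    then show ?case using uv(2) reach_step[OF y(2)] by blast
  qed
  from assms have "(Some x, Some y) \<in> (contr_rel {} E)\<^sup>*" unfolding joined_def contr_def by simp
  from walk[OF this] show ?thesis by simp
qed

definition closed_walk :: "'a \<Rightarrow> 'a list \<Rightarrow> bool" where
  "closed_walk x ws \<longleftrightarrow> ws \<noteq> [] \<and> hd ws = x \<and> last ws = x"

lemma closed_walk_splice:
  assumes ws1: "closed_walk x ws1" "a \<in> set ws1" and ws2: "closed_walk b ws2"
    and sym: "d b a = d a b"
  shows "\<exists>ws. closed_walk x ws \<and> set ws = set ws1 \<union> set ws2 \<and>
    walk_len d ws = walk_len d ws1 + walk_len d ws2 + 2 * d a b"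
proof -
  obtain A B where AB: "ws1 = A @ a # B" using ws1(2) by (metis split_list)
  obtain t where t: "ws2 = b # t" using ws2 unfolding closed_walk_def by (cases ws2) auto
  obtain C where C: "ws2 = C @ [b]"
    using ws2 unfolding closed_walk_def by (metis append_butlast_last_id)
  define ws where "ws = A @ a # ws2 @ a # B"
  have "walk_len d ws = walk_len d (A @ [a]) + d a b + walk_len d (ws2 @ [a]) + walk_len d (a # B)"
    using walk_len_append[of d A a "ws2 @ a # B"] walk_len_append[of d ws2 a B] t
    unfolding ws_def by simp
  moreover have "walk_len d (ws2 @ [a]) = walk_len d ws2 + d b a"
    using walk_len_append[of d C b "[a]"] C by simp
  moreover have "walk_len d (A @ [a]) + walk_len d (a # B) = walk_len d ws1"
    using walk_len_append[of d A a B] AB by simp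
  ultimately have "walk_len d ws = walk_len d ws1 + walk_len d ws2 + 2 * d a b"
    using sym by simp
  moreover have "hd ws = hd ws1" unfolding ws_def AB by (cases A) simp_all
  moreover have "last ws = last ws1" unfolding ws_def AB by (cases B) simp_all
  moreover have "set ws = set ws1 \<union> set ws2" unfolding ws_def AB by auto
  moreover have "ws \<noteq> []" unfolding ws_def by simp
  ultimately show ?thesis using ws1(1) unfolding closed_walk_def by (intro exI[of _ ws]) simp
qed

lemma component_tour:
  assumes "finite T" "\<forall>e\<in>T. set_uprod e \<subseteq> V"
    and sym: "\<forall>a\<in>V. \<forall>b\<in>V. d a b = d b a" and nonneg: "\<forall>a\<in>V. \<forall>b\<in>V. 0 \<le> d a b"
  shows "\<exists>ws. closed_walk x ws \<and> set ws = reach T x \<and>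
    walk_len d ws \<le> 2 * weight d (edges_within T (reach T x))"
  using assms(1,2)
proof (induction T arbitrary: x rule: finite_induct)
  case empty
  have "reach {} x = {x}" unfolding reach_def tree_adj_def by auto
  then show ?case by (intro exI[of _ "[x]"]) (auto simp: closed_walk_def weight_def edges_within_def)
next
  case (insert e T)
  obtain a b where e: "e = Upair a b" by (cases e)
  have eV: "set_uprod e \<subseteq> V" using insert.prems by simp
  have TV: "\<forall>e\<in>T. set_uprod e \<subseteq> V" using insert.prems by auto
  let ?R = "reach T x"
  show ?case
  proof (cases "a \<in> ?R \<longleftrightarrow> b \<in> ?R")
    case True
    obtain ws where ws: "closed_walk x ws" "set ws = ?R"
      "walk_len d ws \<le> 2 * weight d (edges_within T ?R)" using insert.IH TV by blast
    have "weight d (edges_within T ?R) \<le> weight d (edges_within (insert e T) ?R)"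
      using insert.hyps(1) insert.prems edge_len_nonneg[OF _ sym nonneg]
      unfolding edges_within_def by (intro weight_mono) auto
    then show ?thesis using ws reach_insert_inside[OF True] e by auto
  next
    case False
    obtain a' b' where e': "e = Upair a' b'" "a' \<in> ?R" "b' \<notin> ?R"
    proof -
      have "e = Upair b a" using e by simp
      then show ?thesis using that False e by (cases "a \<in> ?R") blast+
    qed
    obtain ws1 where ws1: "closed_walk x ws1" "set ws1 = ?R"
      "walk_len d ws1 \<le> 2 * weight d (edges_within T ?R)" using insert.IH TV by blast
    obtain ws2 where ws2: "closed_walk b' ws2" "set ws2 = reach T b'"
      "walk_len d ws2 \<le> 2 * weight d (edges_within T (reach T b'))" using insert.IH TV by blast
    obtain ws where ws: "closed_walk x ws" "set ws = ?R \<union> reach T b'"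
        "walk_len d ws = walk_len d ws1 + walk_len d ws2 + 2 * d a' b'"
      using closed_walk_splice[OF ws1(1) _ ws2(1), of a' d] ws1(2) ws2(2) e' eV sym by auto
    have len: "edge_len d e = d a' b'" using e' eV sym edge_len_Upair[of d a' b'] by simp
    have reach': "reach (insert e T) x = ?R \<union> reach T b'"
      using reach_insert_cross[OF e'(2,3)] e'(1) by simp
    have "walk_len d ws \<le> 2 * (edge_len d e + weight d (edges_within T ?R)
        + weight d (edges_within T (reach T b')))"
      using ws(3) ws1(3) ws2(3) len by (simp add: ring_distribs)
    also have "\<dots> = 2 * weight d (edges_within (insert e T) (reach (insert e T) x))"
      using weight_within_cross[OF insert.hyps(1) e'(2,3)] e'(1) reach' by simp
    finally show ?thesis using ws(1,2) reach' by blast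
  qed
qed

locale rooted_metric =
  fixes V :: "'a set" and d :: "'a \<Rightarrow> 'a \<Rightarrow> real" and r :: 'a and M :: real
  assumes metric: "finite_metric V d" and root: "r \<in> V" and M_pos: "0 < M"
begin

lemma finite_V: "finite V"
  using metric unfolding finite_metric_def by blast

lemma dist_self: "x \<in> V \<Longrightarrow> d x x = 0"
  using metric unfolding finite_metric_def by blast

lemma dist_sym: "x \<in> V \<Longrightarrow> y \<in> V \<Longrightarrow> d x y = d y x"
  using metric unfolding finite_metric_def by blast

lemma dist_triangle: "x \<in> V \<Longrightarrow> y \<in> V \<Longrightarrow> z \<in> V \<Longrightarrow> d x z \<le> d x y + d y z"
  using metric unfolding finite_metric_def by blast

lemma dist_nonneg: "x \<in> V \<Longrightarrow> y \<in> V \<Longrightarrow> 0 \<le> d x y"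
  using metric unfolding finite_metric_def by (cases "x = y") (auto intro: less_imp_le)

lemma edge_len_eq: "u \<in> V \<Longrightarrow> v \<in> V \<Longrightarrow> edge_len d (Upair u v) = d u v"
  using edge_len_Upair dist_sym by metis

lemma edge_len_nonneg_V: "set_uprod e \<subseteq> V \<Longrightarrow> 0 \<le> edge_len d e"
  using edge_len_nonneg dist_sym dist_nonneg by blast

definition lev_le :: "nat \<Rightarrow> 'a set" where
  "lev_le i = {u \<in> V. d r u \<le> 2 ^ i * M}"

definition lev_lt :: "nat \<Rightarrow> 'a set" where
  "lev_lt i = (if i = 0 then {} else lev_le (i - 1))"

lemma level_le_eq: "level_le V d r M i = lev_le i"
proof (induction i)
  case 0 show ?case unfolding level_le_def lev_le_def level_def by auto
next
  case (Suc i)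
  have "level_le V d r M (Suc i) = level_le V d r M i \<union> level V d r M (Suc i)"
    unfolding level_le_def by (auto simp: atMost_Suc)
  also have "\<dots> = lev_le (Suc i)"
  proof -
    have "(2::real) ^ i * M \<le> 2 ^ Suc i * M" using M_pos by simp
    then show ?thesis unfolding Suc lev_le_def level_def by (auto intro: order.trans)
  qed
  finally show ?case .
qed

lemma level_lt_eq: "level_lt V d r M i = lev_lt i"
proof (cases i)
  case 0 then show ?thesis unfolding level_lt_def lev_lt_def by auto
next
  case (Suc k)
  have "level_lt V d r M i = level_le V d r M k"
    unfolding level_lt_def level_le_def Suc by (simp add: lessThan_Suc_atMost)
  then show ?thesis using level_le_eq Suc unfolding lev_lt_def by auto
qed

lemma root_lev_le: "r \<in> lev_le i"
  using root dist_self M_pos unfolding lev_le_def by auto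

lemma lev_le_V: "lev_le i \<subseteq> V"
  unfolding lev_le_def by auto

lemma lev_lt_le: "lev_lt i \<subseteq> lev_le i"
  unfolding lev_lt_def lev_le_def using M_pos
  by (auto simp: power_Suc[symmetric] intro: order.trans)

definition level_edges :: "nat \<Rightarrow> 'a uprod set" where
  "level_edges i = contr_edges (lev_le i) (lev_lt i)"

lemma level_edges_V: "e \<in> level_edges i \<Longrightarrow> set_uprod e \<subseteq> V"
  using lev_le_V[of i] unfolding level_edges_def contr_edges_def by auto

lemma finite_level_edges: "finite (level_edges i)"
  unfolding level_edges_def using finite_contr_edges finite_subset[OF lev_le_V finite_V] by blast

text \<open>The step is active at level i if it stays within
  radius 2^(i+1) M and does not lie inside V_{<i}; an active step pays its length.\<close>
definition active :: "nat \<Rightarrow> 'a \<Rightarrow> 'a \<Rightarrow> bool" where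
  "active i a b \<longleftrightarrow> max (d r a) (d r b) \<le> 2 ^ (i + 1) * M \<and>
     (i = 0 \<or> 2 ^ (i - 1) * M < max (d r a) (d r b))"

definition clamp :: "nat \<Rightarrow> real \<Rightarrow> real" where
  "clamp i t = max (2 ^ i * M) (min t (2 ^ (i + 1) * M))"

definition charge :: "nat \<Rightarrow> 'a \<Rightarrow> 'a \<Rightarrow> real" where
  "charge i a b = (if active i a b then d a b else 0) + \<bar>clamp i (d r a) - clamp i (d r b)\<bar>"

lemma charge_nonneg: "a \<in> V \<Longrightarrow> b \<in> V \<Longrightarrow> 0 \<le> charge i a b"
  unfolding charge_def using dist_nonneg by simp

lemma walk_charge_nonneg: "set ws \<subseteq> V \<Longrightarrow> 0 \<le> walk_len (charge i) ws"
  using charge_nonneg by (intro walk_len_nonneg) blast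

lemma active_intro:
  assumes "a \<in> V" "b \<in> V" "max (d r a) (d r b) \<le> 2 ^ (i + 1) * M"
    and "\<not> (a \<in> lev_lt i \<and> b \<in> lev_lt i)"
  shows "active i a b"
  using assms unfolding active_def lev_lt_def lev_le_def by (cases "i = 0") auto

lemma dist_le_charge: "a \<in> V \<Longrightarrow> b \<in> V \<Longrightarrow> a = b \<or> active i a b \<Longrightarrow> d a b \<le> charge i a b"
  unfolding charge_def using dist_self by auto

text \<open>An excursion from level i that climbs above radius 2^(i+1) M pays, through the clamped
  radii alone, at least twice the radius 2^i M of the level.\<close>
lemma charge_far_excursion:
  assumes x: "x \<in> lev_le i" and y: "y \<in> lev_le i" and S: "set S \<subseteq> V"
    and s: "s \<in> set S" "2 ^ (i + 1) * M < d r s"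
  shows "2 * (2 ^ i * M) \<le> walk_len (charge i) (x # S @ [y])"
proof -
  let ?g = "\<lambda>a. clamp i (d r a)" and ?h = "\<lambda>a b. \<bar>clamp i (d r a) - clamp i (d r b)\<bar>"
  obtain S1 S2 where S12: "S = S1 @ s # S2" using s(1) by (metis split_list)
  have "(2::real) ^ i * M \<le> 2 ^ (i + 1) * M" using M_pos by simp
  then have g: "?g x = 2 ^ i * M" "?g y = 2 ^ i * M" "?g s = 2 ^ (i + 1) * M"
    using x y s(2) dist_nonneg[OF root] lev_le_V unfolding clamp_def lev_le_def by auto
  have "walk_len ?h (x # S @ [y]) = walk_len ?h ((x # S1) @ [s]) + walk_len ?h (s # S2 @ [y])"
    using walk_len_append[of ?h "x # S1" s "S2 @ [y]"] S12 by simp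
  moreover have "\<bar>?g x - ?g s\<bar> \<le> walk_len ?h ((x # S1) @ [s])"
    using walk_len_telescope[of "(x # S1) @ [s]" ?g] by simp
  moreover have "\<bar>?g s - ?g y\<bar> \<le> walk_len ?h (s # S2 @ [y])"
    using walk_len_telescope[of "s # S2 @ [y]" ?g] by simp
  moreover have "walk_len ?h (x # S @ [y]) \<le> walk_len (charge i) (x # S @ [y])"
  proof (rule walk_len_mono)
    fix a b assume "a \<in> set (x # S @ [y])" "b \<in> set (x # S @ [y])"
    then have "a \<in> V" "b \<in> V" using x y S lev_le_V by auto
    then show "?h a b \<le> charge i a b" unfolding charge_def using dist_nonneg by simp
  qed
  ultimately show ?thesis using g M_pos by (simp add: algebra_simps)
qed

text \<open>Connecting two consecutive visits x, y of V_{\<le>i}, separated by a segment S outside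
  V_{\<le>i}.  If S climbs above radius 2^(i+1) M, route x and y through the root.\<close>
lemma segment_far:
  assumes x: "x \<in> lev_le i" and y: "y \<in> lev_le i" and S: "set S \<subseteq> V - lev_le i"
    and s: "s \<in> set S" "2 ^ (i + 1) * M < d r s"
  shows "\<exists>E \<subseteq> level_edges i. weight d E \<le> walk_len (charge i) (x # S @ [y]) \<and> joined (lev_lt i) E x y"
proof -
  let ?W = "lev_lt i"
  define E where "E = level_edges i \<inter> {Upair x r, Upair y r}"
  have xV: "x \<in> V" and yV: "y \<in> V" using x y lev_le_V by auto
  have xr: "joined ?W E x r"
    by (rule joined_mono[OF joined_direct[OF x root_lev_le]]) (unfold E_def level_edges_def, blast)
  have yr: "joined ?W E y r"
    by (rule joined_mono[OF joined_direct[OF y root_lev_le]]) (unfold E_def level_edges_def, blast)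
  have conn: "joined ?W E x y" using joined_trans[OF xr joined_sym[OF yr]] .
  have "weight d E \<le> weight d {Upair x r, Upair y r}"
    unfolding E_def using xV yV root by (intro weight_mono) (auto intro!: edge_len_nonneg_V)
  also have "\<dots> \<le> edge_len d (Upair x r) + edge_len d (Upair y r)"
    using xV yV root by (intro weight_pair_le edge_len_nonneg_V) auto
  also have "\<dots> \<le> 2 * (2 ^ i * M)"
    using x y dist_sym[OF xV root] dist_sym[OF yV root] edge_len_eq xV yV root
    unfolding lev_le_def by simp
  also have "\<dots> \<le> walk_len (charge i) (x # S @ [y])"
    using charge_far_excursion[OF x y _ s] S by blast
  finally have "weight d E \<le> walk_len (charge i) (x # S @ [y])" .
  moreover have "E \<subseteq> level_edges i" unfolding E_def by blast
  ultimately show ?thesis using conn by blast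
qed

text \<open>On a segment x S y that stays within radius 2^(i+1) M, whose interior avoids V_{\<le>i}
  and whose endpoints are not both in V_{<i}, any two distinct points form an active pair; so
  every step is charged at least its length.\<close>
lemma near_segment_charged:
  assumes x: "x \<in> lev_le i" and y: "y \<in> lev_le i" and S: "set S \<subseteq> V - lev_le i"
    and notW: "\<not> (x \<in> lev_lt i \<and> y \<in> lev_lt i)" and near: "\<forall>s\<in>set S. d r s \<le> 2 ^ (i + 1) * M"
    and ab: "a \<in> set (x # S @ [y])" "b \<in> set (x # S @ [y])"
  shows "d a b \<le> charge i a b"
proof -
  let ?W = "lev_lt i" and ?s = "x # S @ [y]"
  have aV: "a \<in> V" and bV: "b \<in> V" using ab x y S lev_le_V by auto
  have h: "(2::real) ^ i * M \<le> 2 ^ (i + 1) * M" using M_pos by simp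
  have "d r x \<le> 2 ^ (i + 1) * M" "d r y \<le> 2 ^ (i + 1) * M"
    using x y order.trans[OF _ h] unfolding lev_le_def by auto
  then have max: "max (d r a) (d r b) \<le> 2 ^ (i + 1) * M" using ab near by auto
  have inW: "z \<in> {x, y}" if "z \<in> set ?s" "z \<in> ?W" for z
    using that S lev_lt_le[of i] by auto
  show ?thesis
  proof (cases "a = b")
    case True then show ?thesis using dist_le_charge[OF aV bV] by simp
  next
    case False
    have "\<not> (a \<in> ?W \<and> b \<in> ?W)"
    proof
      assume W: "a \<in> ?W \<and> b \<in> ?W"
      then have "a \<in> {x, y}" "b \<in> {x, y}" using inW ab by auto
      then show False using False notW W by auto
    qed
    then have "active i a b" using active_intro[OF aV bV max] by simp
    then show ?thesis using dist_le_charge[OF aV bV] by simp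
  qed
qed

text \<open>If S stays within radius 2^(i+1) M, use the edge xy; the triangle inequality and
  near_segment_charged bound d x y by the charge of the segment.\<close>
lemma segment_near:
  assumes x: "x \<in> lev_le i" and y: "y \<in> lev_le i" and S: "set S \<subseteq> V - lev_le i"
    and notW: "\<not> (x \<in> lev_lt i \<and> y \<in> lev_lt i)" and near: "\<forall>s\<in>set S. d r s \<le> 2 ^ (i + 1) * M"
  shows "\<exists>E \<subseteq> level_edges i. weight d E \<le> walk_len (charge i) (x # S @ [y]) \<and> joined (lev_lt i) E x y"
proof -
  let ?s = "x # S @ [y]"
  define E where "E = level_edges i \<inter> {Upair x y}"
  have xV: "x \<in> V" and yV: "y \<in> V" using x y lev_le_V by auto
  have sV: "set ?s \<subseteq> V" using xV yV S by auto
  have conn: "joined (lev_lt i) E x y" using joined_direct[OF x y] unfolding E_def level_edges_def .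
  have "weight d E \<le> weight d {Upair x y}"
    unfolding E_def using xV yV by (intro weight_mono) (auto intro!: edge_len_nonneg_V)
  also have "\<dots> = d x y" using edge_len_eq[OF xV yV] by (simp add: weight_singleton)
  also have "\<dots> \<le> walk_len d ?s"
    using walk_len_triangle[of ?s d] sV by (auto intro: dist_triangle dist_self)
  also have "\<dots> \<le> walk_len (charge i) ?s"
    using near_segment_charged[OF x y S notW near] by (rule walk_len_mono)
  finally have "weight d E \<le> walk_len (charge i) ?s" .
  moreover have "E \<subseteq> level_edges i" unfolding E_def by blast
  ultimately show ?thesis using conn by blast
qed

lemma level_edges_nonneg: "e \<in> level_edges i \<Longrightarrow> 0 \<le> edge_len d e"
  using edge_len_nonneg_V level_edges_V by blast

lemma segment:
  assumes x: "x \<in> lev_le i" and y: "y \<in> lev_le i" and S: "set S \<subseteq> V - lev_le i"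
  shows "\<exists>E \<subseteq> level_edges i. weight d E \<le> walk_len (charge i) (x # S @ [y]) \<and> joined (lev_lt i) E x y"
proof (cases "x \<in> lev_lt i \<and> y \<in> lev_lt i")
  case True
  have "0 \<le> walk_len (charge i) (x # S @ [y])"
    using x y S lev_le_V by (intro walk_charge_nonneg) auto
  then show ?thesis using joined_contracted True by (intro exI[of _ "{}"]) (auto simp: weight_def)
next
  case notW: False
  show ?thesis
  proof (cases "\<exists>s\<in>set S. 2 ^ (i + 1) * M < d r s")
    case True
    then show ?thesis using segment_far[OF x y S] by blast
  next
    case False
    then have "\<forall>s\<in>set S. d r s \<le> 2 ^ (i + 1) * M" by (auto simp: not_less)
    then show ?thesis using segment_near[OF x y S notW] by blast
  qed
qed

lemma connector_append:
  assumes E1: "E1 \<subseteq> level_edges i" "weight d E1 \<le> walk_len (charge i) (x # S @ [q])"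
      "joined (lev_lt i) E1 x q"
    and E2: "E2 \<subseteq> level_edges i" "weight d E2 \<le> walk_len (charge i) (q # Q)"
      "\<forall>u \<in> set (q # Q) \<inter> lev_le i. joined (lev_lt i) E2 q u"
    and S: "set S \<subseteq> V - lev_le i"
  shows "\<exists>E \<subseteq> level_edges i. weight d E \<le> walk_len (charge i) (x # S @ q # Q) \<and>
    (\<forall>u \<in> set (x # S @ q # Q) \<inter> lev_le i. joined (lev_lt i) E x u)"
proof -
  have fin: "finite E1" "finite E2"
    using finite_subset[OF E1(1) finite_level_edges] finite_subset[OF E2(1) finite_level_edges] .
  have "weight d (E1 \<union> E2) \<le> weight d E1 + weight d E2"
    using E1(1) level_edges_nonneg by (intro weight_union_le fin) blast
  also have "\<dots> \<le> walk_len (charge i) (x # S @ [q]) + walk_len (charge i) (q # Q)"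
    using E1(2) E2(2) by simp
  also have "\<dots> = walk_len (charge i) (x # S @ q # Q)"
    using walk_len_append[of "charge i" "x # S" q Q] by simp
  finally have w: "weight d (E1 \<union> E2) \<le> walk_len (charge i) (x # S @ q # Q)" .
  have "joined (lev_lt i) (E1 \<union> E2) x u" if "u \<in> set (x # S @ q # Q) \<inter> lev_le i" for u
  proof (cases "u = x")
    case False
    then have "u \<in> set (q # Q) \<inter> lev_le i" using that S by auto
    then have "joined (lev_lt i) E2 q u" using E2(3) by blast
    then have "joined (lev_lt i) (E1 \<union> E2) q u" using Un_upper2 by (rule joined_mono)
    moreover have "joined (lev_lt i) (E1 \<union> E2) x q" using joined_mono[OF E1(3) Un_upper1] .
    ultimately show ?thesis by (rule joined_trans[rotated])
  qed simp
  then show ?thesis using E1(1) E2(1) w by (intro exI[of _ "E1 \<union> E2"]) auto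
qed

lemma walk_connector:
  "x \<in> lev_le i \<Longrightarrow> set S \<subseteq> V - lev_le i \<Longrightarrow> set Q \<subseteq> V \<Longrightarrow> last (x # S @ Q) \<in> lev_le i \<Longrightarrow>
   \<exists>E \<subseteq> level_edges i. weight d E \<le> walk_len (charge i) (x # S @ Q) \<and>
     (\<forall>u \<in> set (x # S @ Q) \<inter> lev_le i. joined (lev_lt i) E x u)"
proof (induction Q arbitrary: x S)
  case Nil
  have "S = []"
  proof (rule ccontr)
    assume "S \<noteq> []"
    then have "last (x # S @ []) \<in> set S" by simp
    then show False using Nil.prems by auto
  qed
  then show ?case by (intro exI[of _ "{}"]) (auto simp: weight_def)
next
  case (Cons q Q)
  show ?case
  proof (cases "q \<in> lev_le i")
    case False
    have "set (S @ [q]) \<subseteq> V - lev_le i" using Cons.prems False by auto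
    moreover have "set Q \<subseteq> V" "last (x # (S @ [q]) @ Q) \<in> lev_le i" using Cons.prems by auto
    ultimately have "\<exists>E \<subseteq> level_edges i. weight d E \<le> walk_len (charge i) (x # (S @ [q]) @ Q) \<and>
        (\<forall>u \<in> set (x # (S @ [q]) @ Q) \<inter> lev_le i. joined (lev_lt i) E x u)"
      by (rule Cons.IH[OF Cons.prems(1)])
    then show ?thesis by simp
  next
    case True
    obtain E1 where E1: "E1 \<subseteq> level_edges i" "weight d E1 \<le> walk_len (charge i) (x # S @ [q])"
        "joined (lev_lt i) E1 x q"
      using segment[OF Cons.prems(1) True Cons.prems(2)] by blast
    have "set ([] :: 'a list) \<subseteq> V - lev_le i" "set Q \<subseteq> V" using Cons.prems by auto
    moreover have "last (q # [] @ Q) \<in> lev_le i" using Cons.prems by (cases Q) auto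
    ultimately have "\<exists>E \<subseteq> level_edges i. weight d E \<le> walk_len (charge i) (q # [] @ Q) \<and>
        (\<forall>u \<in> set (q # [] @ Q) \<inter> lev_le i. joined (lev_lt i) E q u)"
      by (rule Cons.IH[OF True])
    then obtain E2 where E2: "E2 \<subseteq> level_edges i" "weight d E2 \<le> walk_len (charge i) (q # Q)"
        "\<forall>u \<in> set (q # Q) \<inter> lev_le i. joined (lev_lt i) E2 q u"
      by auto
    show ?thesis using connector_append[OF E1 E2 Cons.prems(2)] .
  qed
qed

lemma level_connector:
  assumes ws: "closed_walk r ws" "set ws = V"
  shows "\<exists>E \<subseteq> level_edges i. weight d E \<le> walk_len (charge i) ws \<and> connects (lev_le i) (lev_lt i) E"
proof -
  have ws_eq: "r # [] @ tl ws = ws" using ws(1) unfolding closed_walk_def by (cases ws) auto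
  have "set (tl ws) \<subseteq> V" using ws(2) by (metis list.set_sel(2) subsetI tl_Nil)
  moreover have "last (r # [] @ tl ws) \<in> lev_le i" using ws(1) root_lev_le ws_eq
    unfolding closed_walk_def by simp
  ultimately obtain E where E: "E \<subseteq> level_edges i" "weight d E \<le> walk_len (charge i) ws"
      "\<forall>u \<in> V \<inter> lev_le i. joined (lev_lt i) E r u"
    using walk_connector[OF root_lev_le[of i], where S = "[]" and Q = "tl ws"] unfolding ws_eq ws(2) by auto
  have "connects (lev_le i) (lev_lt i) E"
    using E(3) lev_le_V by (intro connects_from_root) blast
  then show ?thesis using E(1,2) by blast
qed

text \<open>The level tree H_i weighs at most the level-i charge of the walk: it is a minimum
  spanning tree, and the connecting edges of level_connector contain a spanning tree.\<close>
lemma level_tree_bound: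
  assumes ws: "closed_walk r ws" "set ws = V" and H: "MST_contr d (lev_le i) (lev_lt i) H"
  shows "weight d H \<le> walk_len (charge i) ws"
proof -
  obtain E where E: "E \<subseteq> level_edges i" "weight d E \<le> walk_len (charge i) ws"
      "connects (lev_le i) (lev_lt i) E"
    using level_connector[OF ws] by blast
  have "finite (lev_le i)" using finite_subset[OF lev_le_V finite_V] .
  then obtain F where F: "F \<subseteq> E" "spanning_tree_contr (lev_le i) (lev_lt i) F"
    using spanning_tree_exists[OF _ root_lev_le _ E(3)] E(1) unfolding level_edges_def by blast
  have "weight d H \<le> weight d F" using H F(2) unfolding MST_contr_def by blast
  also have "\<dots> \<le> weight d E"
    using F(1) E(1) level_edges_nonneg by (intro weight_mono finite_subset[OF E(1) finite_level_edges]) auto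
  finally show ?thesis using E(2) by linarith
qed

lemma clamp_mono: "s \<le> t \<Longrightarrow> clamp i s \<le> clamp i t"
  unfolding clamp_def by simp

lemma clamp_telescope: "(\<Sum>i<N. clamp i x - 2 ^ i * M) = min (max x M) (2 ^ N * M) - M"
proof (induction N)
  case 0 show ?case using M_pos by (simp add: min_def max_def)
next
  case (Suc N)
  have K: "M \<le> 2 ^ N * M" using M_pos by simp
  have step: "min (max x M) K + max K (min x (2 * K)) - K = min (max x M) (2 * K)"
    if "M \<le> K" for K using that M_pos by (simp add: min_def max_def)
  have "(\<Sum>i<Suc N. clamp i x - 2 ^ i * M) = min (max x M) (2 ^ N * M) - M + (clamp N x - 2 ^ N * M)"
    using Suc by simp
  also have "\<dots> = min (max x M) (2 * (2 ^ N * M)) - M"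
    using step[OF K] unfolding clamp_def by (simp add: algebra_simps)
  finally show ?case by (simp add: algebra_simps)
qed

lemma sum_clamp_le: "(\<Sum>i<N. \<bar>clamp i s - clamp i t\<bar>) \<le> \<bar>s - t\<bar>"
proof -
  have ordered: "(\<Sum>i<N. \<bar>clamp i s - clamp i t\<bar>) \<le> t - s" if "s \<le> t" for s t
  proof -
    have "(\<Sum>i<N. \<bar>clamp i s - clamp i t\<bar>) = (\<Sum>i<N. (clamp i t - 2 ^ i * M) - (clamp i s - 2 ^ i * M))"
      using clamp_mono[OF that] by (intro sum.cong) auto
    also have "\<dots> = (\<Sum>i<N. clamp i t - 2 ^ i * M) - (\<Sum>i<N. clamp i s - 2 ^ i * M)"
      by (rule sum_subtractf)
    also have "\<dots> = min (max t M) (2 ^ N * M) - min (max s M) (2 ^ N * M)"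
      unfolding clamp_telescope by simp
    also have "\<dots> \<le> t - s" using that by (simp add: min_def max_def)
    finally show ?thesis .
  qed
  show ?thesis
  proof (cases "s \<le> t")
    case True then show ?thesis using ordered[OF True] by simp
  next
    case False
    then show ?thesis using ordered[of t s] by (simp add: abs_minus_commute)
  qed
qed

text \<open>A pair of points is active on at most two consecutive levels.\<close>
lemma card_active_le: "card {i \<in> {..<N}. active i a b} \<le> 2"
proof (cases "{i \<in> {..<N}. active i a b} = {}")
  case False
  let ?K = "{i \<in> {..<N}. active i a b}"
  define i0 where "i0 = Min ?K"
  have finK: "finite ?K" by simp
  have i0: "i0 \<in> ?K" "\<And>j. j \<in> ?K \<Longrightarrow> i0 \<le> j"
    unfolding i0_def using Min_in[OF finK False] Min_le[OF finK] by blast+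
  have "?K \<subseteq> {i0, Suc i0}"
  proof
    fix j assume j: "j \<in> ?K"
    have "\<not> Suc (Suc i0) \<le> j"
    proof
      assume h: "Suc (Suc i0) \<le> j"
      then have "(2::real) ^ (i0 + 1) \<le> 2 ^ (j - 1)" by (intro power_increasing) auto
      then have "(2::real) ^ (i0 + 1) * M \<le> 2 ^ (j - 1) * M" using M_pos by simp
      moreover have "max (d r a) (d r b) \<le> 2 ^ (i0 + 1) * M" using i0(1) unfolding active_def by auto
      moreover have "2 ^ (j - 1) * M < max (d r a) (d r b)" using j h unfolding active_def by auto
      ultimately show False by linarith
    qed
    then show "j \<in> {i0, Suc i0}" using i0(2)[OF j] by auto
  qed
  then have "card ?K \<le> card {i0, Suc i0}" by (intro card_mono) auto
  then show ?thesis by simp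
qed (metis card.empty zero_le)

text \<open>Summed over all levels, the charges of a pair cost at most three times its distance:
  twice for the direct terms (at most two active levels) and once for the clamped radii.\<close>
lemma sum_charge_le:
  assumes a: "a \<in> V" and b: "b \<in> V"
  shows "(\<Sum>i<N. charge i a b) \<le> 3 * d a b"
proof -
  have "(\<Sum>i<N. if active i a b then d a b else 0) = card {i \<in> {..<N}. active i a b} * d a b"
    using sum.inter_filter[of "{..<N}" "\<lambda>_. d a b" "\<lambda>i. active i a b", symmetric] by simp
  also have "\<dots> \<le> 2 * d a b"
    using card_active_le[of N a b] dist_nonneg[OF a b] by (intro mult_right_mono) auto
  finally have direct: "(\<Sum>i<N. if active i a b then d a b else 0) \<le> 2 * d a b" .
  have "\<bar>d r a - d r b\<bar> \<le> d a b"
    using dist_triangle[OF root a b] dist_triangle[OF root b a] dist_sym[OF a b] by linarith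
  then have radial: "(\<Sum>i<N. \<bar>clamp i (d r a) - clamp i (d r b)\<bar>) \<le> d a b"
    using sum_clamp_le[where N = N and s = "d r a" and t = "d r b"] by linarith
  show ?thesis using direct radial unfolding charge_def sum.distrib by linarith
qed

lemma spanning_tree_edges_V: "spanning_tree_contr V {} T \<Longrightarrow> e \<in> T \<Longrightarrow> set_uprod e \<subseteq> V"
  unfolding spanning_tree_contr_def contr_edges_def by auto

lemma spanning_tree_reach:
  assumes T: "spanning_tree_contr V {} T"
  shows "reach T r = V"
proof
  show "reach T r \<subseteq> V"
  proof (rule reach_least)
    fix y z assume "y \<in> V" "Upair y z \<in> T"
    then show "z \<in> V" using spanning_tree_edges_V[OF T] by fastforce
  qed (rule root)
  show "V \<subseteq> reach T r"
  proof
    fix x assume "x \<in> V"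
    then have "joined {} T r x" using T root unfolding spanning_tree_contr_iff connects_def by blast
    then show "x \<in> reach T r" by (rule joined_uncontracted)
  qed
qed

lemma spanning_tree_tour:
  assumes T: "spanning_tree_contr V {} T"
  shows "\<exists>ws. closed_walk r ws \<and> set ws = V \<and> walk_len d ws \<le> 2 * weight d T"
proof -
  have fin: "finite T" using T unfolding spanning_tree_contr_def by blast
  have TV: "\<forall>e\<in>T. set_uprod e \<subseteq> V" using spanning_tree_edges_V[OF T] by blast
  have "edges_within T (reach T r) = T" using TV unfolding spanning_tree_reach[OF T] edges_within_def by auto
  then show ?thesis
    using component_tour[OF fin TV, of d r] spanning_tree_reach[OF T] dist_sym dist_nonneg by auto
qed

lemma spanning_tree_weight_nonneg: "spanning_tree_contr V {} T \<Longrightarrow> 0 \<le> weight d T"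
  unfolding weight_def using spanning_tree_edges_V edge_len_nonneg_V by (intro sum_nonneg) blast

text \<open>Beyond the radius of V all vertices are contracted, so the high levels have no edges.\<close>
lemma levels_eventually_empty: "\<exists>N. \<forall>i>N. level_edges i = {}"
proof -
  obtain N where N: "Max (d r ` V) / M < 2 ^ N"
    using real_arch_pow[of 2 "Max (d r ` V) / M"] by auto
  have far: "d r u \<le> 2 ^ N * M" if "u \<in> V" for u
  proof -
    have "d r u \<le> Max (d r ` V)" using finite_V that by simp
    also have "\<dots> < 2 ^ N * M" using N M_pos by (simp add: divide_less_eq)
    finally show ?thesis by simp
  qed
  have "level_edges i = {}" if i: "i > N" for i
  proof -
    have h: "(2::real) ^ N * M \<le> 2 ^ (i - 1) * M"
      using i M_pos by (intro mult_right_mono power_increasing) auto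
    have "V \<subseteq> lev_lt i"
    proof
      fix u assume u: "u \<in> V"
      then have "d r u \<le> 2 ^ (i - 1) * M" using far[OF u] h by linarith
      then show "u \<in> lev_lt i" using i u unfolding lev_lt_def lev_le_def by auto
    qed
    then have "lev_le i \<subseteq> lev_lt i" using lev_le_V[of i] by blast
    then show ?thesis unfolding level_edges_def contr_edges_def by blast
  qed
  then show ?thesis by blast
qed

text \<open>MST(G) is attained: V is finite and G has a spanning tree.\<close>
lemma MST_weight_attained: "\<exists>T. spanning_tree_contr V {} T \<and> MST_weight V d = weight d T"
proof -
  let ?S = "{weight d F | F. spanning_tree_contr V {} F}"
  have "?S \<subseteq> weight d ` Pow (contr_edges V {})" unfolding spanning_tree_contr_def by blast
  then have fin: "finite ?S"
    by (rule finite_subset) (use finite_contr_edges[OF finite_V] in simp)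
  have "joined {} (contr_edges V {}) x y" if "x \<in> V" "y \<in> V" for x y
    using joined_mono[OF joined_direct[OF that] Int_lower1] .
  then have "connects V {} (contr_edges V {})" unfolding connects_def by blast
  then obtain F0 where "spanning_tree_contr V {} F0"
    using spanning_tree_exists[OF finite_V root subset_refl] by blast
  then have "?S \<noteq> {}" by blast
  then have "MST_weight V d \<in> ?S" unfolding MST_weight_def using Min_in[OF fin] by blast
  then show ?thesis by auto
qed

text \<open>Each level tree is bounded by the level-i charge of the doubled tour of T, and all
  charges together cost at most three times the tour length.\<close>
theorem level_trees_weight_le:
  assumes T: "spanning_tree_contr V {} T" and Hs: "\<And>i. MST_contr d (lev_le i) (lev_lt i) (Hs i)"
  shows "weight d (\<Union>i. Hs i) \<le> 6 * weight d T"
proof -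
  obtain ws where ws: "closed_walk r ws" "set ws = V" "walk_len d ws \<le> 2 * weight d T"
    using spanning_tree_tour[OF T] by blast
  obtain N where N: "\<forall>i>N. level_edges i = {}" using levels_eventually_empty by blast
  have Hs_edges: "Hs i \<subseteq> level_edges i" for i
    using Hs[of i] unfolding MST_contr_def spanning_tree_contr_def level_edges_def by blast
  have high: "Hs i = {}" if "i > N" for i using Hs_edges[of i] N that by blast
  have UN: "(\<Union>i. Hs i) = (\<Union>i<Suc N. Hs i)"
  proof (intro equalityI subsetI)
    fix e assume "e \<in> (\<Union>i. Hs i)"
    then obtain i where i: "e \<in> Hs i" by blast
    then have "i < Suc N" using high[of i] by (cases "i > N") auto
    then show "e \<in> (\<Union>i<Suc N. Hs i)" using i by blast
  qed blast
  have "weight d (\<Union>i. Hs i) \<le> (\<Sum>i<Suc N. weight d (Hs i))"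
    unfolding UN
  proof (rule weight_UN_le)
    show "finite (Hs i)" for i using finite_subset[OF Hs_edges finite_level_edges] .
    show "0 \<le> edge_len d e" if "e \<in> (\<Union>i<Suc N. Hs i)" for e
      using that Hs_edges level_edges_nonneg by blast
  qed simp
  also have "\<dots> \<le> (\<Sum>i<Suc N. walk_len (charge i) ws)"
    using level_tree_bound[OF ws(1,2) Hs] by (rule sum_mono)
  also have "\<dots> = walk_len (\<lambda>a b. \<Sum>i<Suc N. charge i a b) ws"
    by (rule walk_len_sum[symmetric])
  also have "\<dots> \<le> walk_len (\<lambda>a b. 3 * d a b) ws"
  proof (rule walk_len_mono)
    fix a b assume "a \<in> set ws" "b \<in> set ws"
    then show "(\<Sum>i<Suc N. charge i a b) \<le> 3 * d a b" using ws(2) sum_charge_le by blast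
  qed
  also have "\<dots> = 3 * walk_len d ws" by (rule walk_len_cmult)
  also have "\<dots> \<le> 6 * weight d T" using ws(3) by linarith
  finally show ?thesis .
qed

end

theorem lemma5:
  fixes V :: "'a set" and d :: "'a \<Rightarrow> 'a \<Rightarrow> real" and r :: 'a and M :: real
    and H :: "'a uprod set"
  assumes "finite_metric V d"
    and "r \<in> V"
    and "M > 0"
    and "level_prim_tree V d r M H"
  shows "weight d H \<le> 8 * MST_weight V d"
proof -
  interpret rooted_metric V d r M using assms(1-3) by unfold_locales
  obtain Hs where Hs: "\<And>i. MST_contr d (lev_le i) (lev_lt i) (Hs i)" and H: "H = (\<Union>i. Hs i)"
    using assms(4) unfolding level_prim_tree_def level_le_eq level_lt_eq by blast
  obtain T where T: "spanning_tree_contr V {} T" "MST_weight V d = weight d T"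
    using MST_weight_attained by blast
  have "weight d H \<le> 6 * weight d T" unfolding H using level_trees_weight_le[OF T(1) Hs] .
  then show ?thesis using T spanning_tree_weight_nonneg[OF T(1)] by linarith
qed

end
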